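(* There exist supplementary difference sets in $\mathbb{Z}_{69}$ with parameters $(69;31,27;24)$; that is, there exist subsets $X,Y\subseteq\mathbb{Z}_{69}$ with $|X|=31$, $|Y|=27$ such that for every nonzero $c\in\mathbb{Z}_{69}$, the number of ordered pairs $(a,b)\in X\times X$ with $a-b\equiv c\pmod{69}$ plus the number of ordered pairs $(a,b)\in Y\times Y$ with $a-b\equiv c\pmod{69}$ equals $24$.
   Context: $\mathbb{Z}_v$ denotes the ring of integers modulo $v$. Subsets $X_1,\dots,X_t\subseteq\mathbb{Z}_v$ with $|X_i|=k_i$ are supplementary difference sets (SDS) with parameters $(v;k_1,\dots,k_t;\lambda)$ if for every nonzero $c\in\mathbb{Z}_v$ there are exactly $\lambda$ ordered triples $(a,b,i)$ with $a,b\in X_i$ and $a-b\equiv c\pmod v$. *)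

theory Defs
  imports Main
begin

text \<open>Z_v is modelled by the residues {0..<v} :: nat set; subtraction mod v is
  (a + v - b) mod v for a, b < v.\<close>

definition diff_count :: "nat \<Rightarrow> nat set \<Rightarrow> nat \<Rightarrow> nat" where
  "diff_count v X c = card {(a, b). a \<in> X \<and> b \<in> X \<and> (a + v - b) mod v = c}"

definition is_SDS :: "nat \<Rightarrow> nat set list \<Rightarrow> nat list \<Rightarrow> nat \<Rightarrow> bool" where
  "is_SDS v Xs ks lam \<longleftrightarrow>
     length Xs = length ks \<and>
     (\<forall>i < length Xs. Xs ! i \<subseteq> {0..<v} \<and> card (Xs ! i) = ks ! i) \<and>
     (\<forall>c \<in> {1..<v}. (\<Sum>i < length Xs. diff_count v (Xs ! i) c) = lam)"

end

theory Submission
  imports Defs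
begin

text \<open>A pair (a, b) \<in> X \<times> X with a - b = c is determined by a, since b = a - c;
  so the number of such pairs is the number of a \<in> X with a - c \<in> X, which can be
  evaluated on explicit lists of residues. For the two sets below all 68 conditions
  are then checked by computation.\<close>

lemma mod_sub_cases:
  fixes a b v :: nat
  assumes "a < v" "b < v"
  shows "(a + v - b) mod v = (if b \<le> a then a - b else a + v - b)"
proof (cases "b \<le> a")
  case True
  then have "(a + v - b) mod v = (a - b + v) mod v" by simp
  also have "\<dots> = a - b" using assms by simp
  finally show ?thesis using True by simp
next
  case False
  then show ?thesis using assms by simp
qed

lemma mod_sub_eq_iff:
  fixes a b c v :: nat
  assumes "a < v" "b < v" "c < v"
  shows "(a + v - b) mod v = c \<longleftrightarrow> b = (a + v - c) mod v"
  using assms by (auto simp: mod_sub_cases)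

lemma diff_count_eq_card:
  assumes "X \<subseteq> {0..<v}" "c < v"
  shows "diff_count v X c = card {a \<in> X. (a + v - c) mod v \<in> X}"
proof -
  have partner: "(a + v - b) mod v = c \<longleftrightarrow> b = (a + v - c) mod v" if "a \<in> X" "b \<in> X" for a b
    using that assms by (intro mod_sub_eq_iff) auto
  have "{(a, b). a \<in> X \<and> b \<in> X \<and> (a + v - b) mod v = c}
        = (\<lambda>a. (a, (a + v - c) mod v)) ` {a \<in> X. (a + v - c) mod v \<in> X}"
  proof (intro set_eqI iffI)
    fix p assume "p \<in> {(a, b). a \<in> X \<and> b \<in> X \<and> (a + v - b) mod v = c}"
    then obtain a b where "p = (a, b)" "a \<in> X" "b \<in> X" "(a + v - b) mod v = c"
      by blast
    with partner show "p \<in> (\<lambda>a. (a, (a + v - c) mod v)) ` {a \<in> X. (a + v - c) mod v \<in> X}"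
      by auto
  next
    fix p assume "p \<in> (\<lambda>a. (a, (a + v - c) mod v)) ` {a \<in> X. (a + v - c) mod v \<in> X}"
    with partner show "p \<in> {(a, b). a \<in> X \<and> b \<in> X \<and> (a + v - b) mod v = c}"
      by auto
  qed
  moreover have "inj_on (\<lambda>a. (a, (a + v - c) mod v)) {a \<in> X. (a + v - c) mod v \<in> X}"
    by (rule inj_onI) simp
  ultimately show ?thesis
    unfolding diff_count_def by (simp add: card_image)
qed

definition diff_count_list :: "nat \<Rightarrow> nat list \<Rightarrow> nat \<Rightarrow> nat" where
  "diff_count_list v xs c = length (filter (\<lambda>a. (a + v - c) mod v \<in> set xs) xs)"

lemma diff_count_set:
  assumes "distinct xs" "\<forall>x \<in> set xs. x < v" "c < v"
  shows "diff_count v (set xs) c = diff_count_list v xs c"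
proof -
  have "diff_count v (set xs) c = card (set (filter (\<lambda>a. (a + v - c) mod v \<in> set xs) xs))"
    using assms(2,3) by (subst diff_count_eq_card) auto
  also have "\<dots> = diff_count_list v xs c"
    unfolding diff_count_list_def using distinct_card[OF distinct_filter[OF assms(1)]] .
  finally show ?thesis .
qed

lemma is_SDS_of_lists:
  assumes blocks: "\<forall>xs \<in> set xss. distinct xs \<and> (\<forall>x \<in> set xs. x < v)"
    and sizes: "map length xss = ks"
    and counts: "\<forall>c \<in> {1..<v}. (\<Sum>xs \<leftarrow> xss. diff_count_list v xs c) = lam"
  shows "is_SDS v (map set xss) ks lam"
proof -
  have blocks_ok: "map set xss ! i \<subseteq> {0..<v} \<and> card (map set xss ! i) = ks ! i"
    if "i < length (map set xss)" for i
  proof -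
    have "distinct (xss ! i)" "\<forall>x \<in> set (xss ! i). x < v"
      using that blocks nth_mem by auto
    with that sizes show ?thesis by (auto simp: distinct_card)
  qed
  have counts_ok: "(\<Sum>i < length (map set xss). diff_count v (map set xss ! i) c) = lam"
    if c: "c \<in> {1..<v}" for c
  proof -
    have "diff_count v (set (xss ! i)) c = diff_count_list v (xss ! i) c" if "i < length xss" for i
      using that blocks nth_mem c by (intro diff_count_set) auto
    then have "(\<Sum>i < length (map set xss). diff_count v (map set xss ! i) c)
          = (\<Sum>i < length xss. diff_count_list v (xss ! i) c)"
      by simp
    also have "\<dots> = (\<Sum>xs \<leftarrow> xss. diff_count_list v xs c)"
      by (simp add: sum_list_sum_nth atLeast0LessThan)
    finally show ?thesis using counts c by simp
  qed
  have "length (map set xss) = length ks"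
    using sizes by auto
  with blocks_ok counts_ok show ?thesis
    unfolding is_SDS_def by blast
qed

definition sds69_X :: "nat list" where
  "sds69_X = [2, 4, 6, 7, 8, 15, 16, 18, 19, 20, 21, 22, 23, 24, 28, 32,
              34, 35, 41, 42, 46, 48, 51, 53, 56, 57, 60, 63, 66, 67, 68]"

definition sds69_Y :: "nat list" where
  "sds69_Y = [3, 5, 9, 10, 12, 13, 14, 16, 18, 19, 20, 21, 22, 28,
              29, 33, 40, 42, 43, 45, 48, 51, 56, 60, 61, 66, 68]"

text \<open>Stated over the list [1..<69], so that code_simp evaluates it directly.\<close>
lemma sds69_counts_upt:
  "list_all (\<lambda>c. diff_count_list 69 sds69_X c + diff_count_list 69 sds69_Y c = 24) [1..<69]"
  unfolding sds69_X_def sds69_Y_def diff_count_list_def by code_simp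

lemma sds69_counts:
  "\<forall>c \<in> {1..<69}. (\<Sum>xs \<leftarrow> [sds69_X, sds69_Y]. diff_count_list 69 xs c) = 24"
proof
  fix c :: nat assume "c \<in> {1..<69}"
  then have "diff_count_list 69 sds69_X c + diff_count_list 69 sds69_Y c = 24"
    using sds69_counts_upt unfolding list_all_iff set_upt by blast
  then show "(\<Sum>xs \<leftarrow> [sds69_X, sds69_Y]. diff_count_list 69 xs c) = 24"
    by simp
qed

theorem mainTheorem3:
  shows "\<exists>X Y. is_SDS 69 [X, Y] [31, 27] 24"
proof -
  have "is_SDS 69 (map set [sds69_X, sds69_Y]) [31, 27] 24"
    by (rule is_SDS_of_lists[OF _ _ sds69_counts]) (simp_all add: sds69_X_def sds69_Y_def)
  then show ?thesis by auto
qed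

end
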